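(* Let $(R,\mathfrak{m},k)$ be a Noetherian local ring. Suppose that for every finitely generated torsion-less $R$-module $M$, freeness of $M^\ast=\operatorname{Hom}_R(M,R)$ implies freeness of $M$. Then $\operatorname{depth}(R)<2$.
   Context: A module $M$ is torsion-less if the natural map $M\to M^{\ast\ast}$ is injective. *)

theory Defs
  imports "HOL-Algebra.Algebra" "HOL-Library.Extended_Nat"
begin

definition is_lin_comb :: "('a, 'c) ring_scheme \<Rightarrow> ('a, 'b, 'd) module_scheme \<Rightarrow> 'b set \<Rightarrow> 'b \<Rightarrow> bool" where
  "is_lin_comb R M S x \<longleftrightarrow>
     (\<exists>F c. finite F \<and> F \<subseteq> S \<and> c \<in> F \<rightarrow> carrier R \<and>
            x = finsum M (\<lambda>v. smult M (c v) v) F)"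

definition spans :: "('a, 'c) ring_scheme \<Rightarrow> ('a, 'b, 'd) module_scheme \<Rightarrow> 'b set \<Rightarrow> bool" where
  "spans R M S \<longleftrightarrow> S \<subseteq> carrier M \<and> (\<forall>x \<in> carrier M. is_lin_comb R M S x)"

definition lin_indep :: "('a, 'c) ring_scheme \<Rightarrow> ('a, 'b, 'd) module_scheme \<Rightarrow> 'b set \<Rightarrow> bool" where
  "lin_indep R M S \<longleftrightarrow>
     (\<forall>F c. finite F \<and> F \<subseteq> S \<and> c \<in> F \<rightarrow> carrier R \<and>
            finsum M (\<lambda>v. smult M (c v) v) F = \<zero>\<^bsub>M\<^esub> \<longrightarrow> (\<forall>v \<in> F. c v = \<zero>\<^bsub>R\<^esub>))"

definition free_module :: "('a, 'c) ring_scheme \<Rightarrow> ('a, 'b, 'd) module_scheme \<Rightarrow> bool" where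
  "free_module R M \<longleftrightarrow> (\<exists>B. B \<subseteq> carrier M \<and> spans R M B \<and> lin_indep R M B)"

definition fin_gen :: "('a, 'c) ring_scheme \<Rightarrow> ('a, 'b, 'd) module_scheme \<Rightarrow> bool" where
  "fin_gen R M \<longleftrightarrow> (\<exists>S. finite S \<and> spans R M S)"

definition self_module :: "('a, 'c) ring_scheme \<Rightarrow> ('a, 'a) module" where
  "self_module R = \<lparr>carrier = carrier R, monoid.mult = monoid.mult R, one = \<one>\<^bsub>R\<^esub>,
     ring.zero = \<zero>\<^bsub>R\<^esub>, ring.add = add R, module.smult = monoid.mult R\<rparr>"

definition mod_hom :: "('a, 'c) ring_scheme \<Rightarrow> ('a, 'b, 'd) module_scheme \<Rightarrow> ('a, 'e, 'f) module_scheme \<Rightarrow> ('b \<Rightarrow> 'e) \<Rightarrow> bool" where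
  "mod_hom R M N f \<longleftrightarrow> f \<in> carrier M \<rightarrow> carrier N \<and>
     (\<forall>x \<in> carrier M. \<forall>y \<in> carrier M. f (x \<oplus>\<^bsub>M\<^esub> y) = f x \<oplus>\<^bsub>N\<^esub> f y) \<and>
     (\<forall>a \<in> carrier R. \<forall>x \<in> carrier M. f (smult M a x) = smult N a (f x))"

text \<open>The dual module M* = Hom_R(M,R), with pointwise operations (maps extensional on carrier M).
  The ring multiplication/one fields of the record are irrelevant for the module structure.\<close>
definition dual_module :: "('a, 'c) ring_scheme \<Rightarrow> ('a, 'b, 'd) module_scheme \<Rightarrow> ('a, 'b \<Rightarrow> 'a) module" where
  "dual_module R M = \<lparr>carrier = {f. mod_hom R M (self_module R) f \<and> f \<in> extensional (carrier M)},
     monoid.mult = (\<lambda>f g. \<lambda>x \<in> carrier M. f x \<otimes>\<^bsub>R\<^esub> g x),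
     one = (\<lambda>x \<in> carrier M. \<one>\<^bsub>R\<^esub>),
     ring.zero = (\<lambda>x \<in> carrier M. \<zero>\<^bsub>R\<^esub>),
     ring.add = (\<lambda>f g. \<lambda>x \<in> carrier M. f x \<oplus>\<^bsub>R\<^esub> g x),
     module.smult = (\<lambda>a f. \<lambda>x \<in> carrier M. a \<otimes>\<^bsub>R\<^esub> f x)\<rparr>"

definition double_dual_map :: "('a, 'c) ring_scheme \<Rightarrow> ('a, 'b, 'd) module_scheme \<Rightarrow> 'b \<Rightarrow> (('b \<Rightarrow> 'a) \<Rightarrow> 'a)" where
  "double_dual_map R M = (\<lambda>x \<in> carrier M. \<lambda>f \<in> carrier (dual_module R M). f x)"

definition torsionless :: "('a, 'c) ring_scheme \<Rightarrow> ('a, 'b, 'd) module_scheme \<Rightarrow> bool" where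
  "torsionless R M \<longleftrightarrow> inj_on (double_dual_map R M) (carrier M)"

definition regular_seq :: "('a, 'c) ring_scheme \<Rightarrow> 'a set \<Rightarrow> 'a list \<Rightarrow> bool" where
  "regular_seq R m xs \<longleftrightarrow> set xs \<subseteq> m \<and> genideal R (set xs) \<noteq> carrier R \<and>
     (\<forall>i < length xs. \<forall>y \<in> carrier R.
        xs ! i \<otimes>\<^bsub>R\<^esub> y \<in> genideal R (set (take i xs)) \<longrightarrow> y \<in> genideal R (set (take i xs)))"

definition depth :: "('a, 'c) ring_scheme \<Rightarrow> 'a set \<Rightarrow> enat" where
  "depth R m = Sup {enat (length xs) | xs. regular_seq R m xs}"

end

theory Submission
  imports Defs
begin

(* Suppose depth R \<ge> 2 and let a, b be the first two terms of a regular sequence, I = (a, b).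
   I is torsionless, since it embeds into R.  Every functional f on I is multiplication by some r:
   from b f(a) = a f(b) and regularity of b modulo a we get f(a) = r a, and then f(b) = r b
   because a is a non-zerodivisor.  Hence I* = R is free.  But I is not free: any two elements
   x, y of an ideal satisfy y x - x y = 0, so a basis has at most one element and I would be
   principal, (a, b) = (d).  Writing a = p d, b = q d, regularity gives p \<in> (a), so a = r a d and
   1 = r d \<in> (a, b), which is impossible. *)

lemma self_module_simps [simp]:
  "carrier (self_module R) = carrier R" "add (self_module R) = add R"
  "ring.zero (self_module R) = ring.zero R" "smult (self_module R) = monoid.mult R"
  by (simp_all add: self_module_def)

lemma dual_module_simps [simp]:
  "carrier (dual_module R M) = {f. mod_hom R M (self_module R) f \<and> f \<in> extensional (carrier M)}"
  "add (dual_module R M) = (\<lambda>f g. \<lambda>x \<in> carrier M. f x \<oplus>\<^bsub>R\<^esub> g x)"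
  "ring.zero (dual_module R M) = (\<lambda>x \<in> carrier M. \<zero>\<^bsub>R\<^esub>)"
  "smult (dual_module R M) = (\<lambda>a f. \<lambda>x \<in> carrier M. a \<otimes>\<^bsub>R\<^esub> f x)"
  by (simp_all add: dual_module_def)

lemma dual_module_memD:
  assumes "f \<in> carrier (dual_module R M)"
  shows dual_module_closed: "x \<in> carrier M \<Longrightarrow> f x \<in> carrier R"
    and dual_module_add: "\<lbrakk>x \<in> carrier M; y \<in> carrier M\<rbrakk> \<Longrightarrow> f (x \<oplus>\<^bsub>M\<^esub> y) = f x \<oplus>\<^bsub>R\<^esub> f y"
    and dual_module_smult: "\<lbrakk>a \<in> carrier R; x \<in> carrier M\<rbrakk> \<Longrightarrow> f (a \<odot>\<^bsub>M\<^esub> x) = a \<otimes>\<^bsub>R\<^esub> f x"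
  using assms by (auto simp: mod_hom_def)

lemma dual_module_eqI:
  assumes "f \<in> carrier (dual_module R M)" "g \<in> carrier (dual_module R M)"
    and "\<And>x. x \<in> carrier M \<Longrightarrow> f x = g x"
  shows "f = g"
  using assms by (auto intro: extensionalityI)

lemma (in module) dual_module_memI:
  assumes "\<And>x. x \<in> carrier M \<Longrightarrow> f x \<in> carrier R"
    and "\<And>x y. \<lbrakk>x \<in> carrier M; y \<in> carrier M\<rbrakk> \<Longrightarrow> f (x \<oplus>\<^bsub>M\<^esub> y) = f x \<oplus> f y"
    and "\<And>a x. \<lbrakk>a \<in> carrier R; x \<in> carrier M\<rbrakk> \<Longrightarrow> f (a \<odot>\<^bsub>M\<^esub> x) = a \<otimes> f x"
  shows "(\<lambda>x \<in> carrier M. f x) \<in> carrier (dual_module R M)"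
  using assms by (auto simp: mod_hom_def)

lemma (in module) dual_module_add_closed:
  assumes "f \<in> carrier (dual_module R M)" "g \<in> carrier (dual_module R M)"
  shows "f \<oplus>\<^bsub>dual_module R M\<^esub> g \<in> carrier (dual_module R M)"
  using assms unfolding dual_module_simps(2)
  by (intro dual_module_memI)
    (auto simp del: dual_module_simps(1)
      simp: dual_module_closed dual_module_add dual_module_smult r_distr R.a_ac)

lemma (in module) dual_module_smult_closed:
  assumes "a \<in> carrier R" "f \<in> carrier (dual_module R M)"
  shows "a \<odot>\<^bsub>dual_module R M\<^esub> f \<in> carrier (dual_module R M)"
  using assms unfolding dual_module_simps(4)
  by (intro dual_module_memI)
    (auto simp del: dual_module_simps(1)
      simp: dual_module_closed dual_module_add dual_module_smult r_distr m_lcomm)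

lemma (in module) dual_module_zero_closed: "\<zero>\<^bsub>dual_module R M\<^esub> \<in> carrier (dual_module R M)"
  unfolding dual_module_simps(3) by (intro dual_module_memI) auto

lemma (in module) dual_module_neg_closed:
  assumes "f \<in> carrier (dual_module R M)"
  shows "(\<lambda>x \<in> carrier M. \<ominus> f x) \<in> carrier (dual_module R M)"
  using assms
  by (intro dual_module_memI)
    (auto simp del: dual_module_simps(1)
      simp: dual_module_closed dual_module_add dual_module_smult R.minus_add R.r_minus)

lemma (in module) module_dual_module: "module R (dual_module R M)"
proof -
  let ?D = "dual_module R M"
  note closed = dual_module_add_closed dual_module_smult_closed dual_module_zero_closed
    and D_closed = dual_module_closed[of _ R M] and D_eqI = dual_module_eqI[of _ R M]
  show ?thesis
  proof (rule moduleI)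
    show "abelian_group ?D"
    proof (rule abelian_groupI)
      fix f g h assume "f \<in> carrier ?D" "g \<in> carrier ?D" "h \<in> carrier ?D"
      then show "f \<oplus>\<^bsub>?D\<^esub> g \<oplus>\<^bsub>?D\<^esub> h = f \<oplus>\<^bsub>?D\<^esub> (g \<oplus>\<^bsub>?D\<^esub> h)"
        by (intro D_eqI closed) (auto simp: D_closed R.a_assoc)
    next
      fix f g assume "f \<in> carrier ?D" "g \<in> carrier ?D"
      then show "f \<oplus>\<^bsub>?D\<^esub> g = g \<oplus>\<^bsub>?D\<^esub> f"
        by (intro D_eqI closed) (auto simp: D_closed R.a_comm)
    next
      fix f assume f: "f \<in> carrier ?D"
      then show "\<zero>\<^bsub>?D\<^esub> \<oplus>\<^bsub>?D\<^esub> f = f"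
        by (intro D_eqI closed) (auto simp: D_closed)
      show "\<exists>g \<in> carrier ?D. g \<oplus>\<^bsub>?D\<^esub> f = \<zero>\<^bsub>?D\<^esub>"
        using f dual_module_neg_closed[OF f]
        by (intro bexI[of _ "\<lambda>x \<in> carrier M. \<ominus> f x"] D_eqI closed)
          (auto simp: D_closed R.l_neg)
    qed (use closed in auto)
  next
    fix a b f assume "a \<in> carrier R" "b \<in> carrier R" "f \<in> carrier ?D"
    then show "(a \<oplus> b) \<odot>\<^bsub>?D\<^esub> f = a \<odot>\<^bsub>?D\<^esub> f \<oplus>\<^bsub>?D\<^esub> b \<odot>\<^bsub>?D\<^esub> f"
      and "(a \<otimes> b) \<odot>\<^bsub>?D\<^esub> f = a \<odot>\<^bsub>?D\<^esub> (b \<odot>\<^bsub>?D\<^esub> f)"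
      by (intro D_eqI closed; auto simp: D_closed l_distr m_assoc)+
  next
    fix a f g assume "a \<in> carrier R" "f \<in> carrier ?D" "g \<in> carrier ?D"
    then show "a \<odot>\<^bsub>?D\<^esub> (f \<oplus>\<^bsub>?D\<^esub> g) = a \<odot>\<^bsub>?D\<^esub> f \<oplus>\<^bsub>?D\<^esub> a \<odot>\<^bsub>?D\<^esub> g"
      by (intro D_eqI closed) (auto simp: D_closed r_distr)
  next
    fix f assume "f \<in> carrier ?D"
    then show "\<one> \<odot>\<^bsub>?D\<^esub> f = f"
      by (intro D_eqI closed) (auto simp: D_closed)
  qed (use closed is_cring in auto)
qed

lemma (in module) free_module_singletonI:
  assumes v: "v \<in> carrier M"
    and generates: "\<And>x. x \<in> carrier M \<Longrightarrow> \<exists>r \<in> carrier R. x = r \<odot>\<^bsub>M\<^esub> v"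
    and torsion_free: "\<And>r. \<lbrakk>r \<in> carrier R; r \<odot>\<^bsub>M\<^esub> v = \<zero>\<^bsub>M\<^esub>\<rbrakk> \<Longrightarrow> r = \<zero>"
  shows "free_module R M"
proof -
  have sum_singleton: "finsum M (\<lambda>w. c w \<odot>\<^bsub>M\<^esub> w) {v} = c v \<odot>\<^bsub>M\<^esub> v"
    if "c v \<in> carrier R" for c
    using that v by simp
  have "is_lin_comb R M {v} x" if x: "x \<in> carrier M" for x
  proof -
    obtain r where "r \<in> carrier R" "x = r \<odot>\<^bsub>M\<^esub> v"
      using generates[OF x] by blast
    then show ?thesis
      unfolding is_lin_comb_def using sum_singleton[of "\<lambda>_. r"]
      by (intro exI[of _ "{v}"] exI[of _ "\<lambda>_. r"]) auto
  qed
  then have "spans R M {v}"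
    using v by (simp add: spans_def)
  moreover have "lin_indep R M {v}"
    unfolding lin_indep_def
  proof (intro allI impI ballI)
    fix F c w
    assume F: "finite F \<and> F \<subseteq> {v} \<and> c \<in> F \<rightarrow> carrier R \<and>
      finsum M (\<lambda>v. c v \<odot>\<^bsub>M\<^esub> v) F = \<zero>\<^bsub>M\<^esub>" and "w \<in> F"
    then have "F = {v}" "w = v" by auto
    with F show "c w = \<zero>"
      using sum_singleton[of c] torsion_free by auto
  qed
  ultimately show ?thesis
    using v by (auto simp: free_module_def)
qed

lemma (in module) spans_subset_singletonD:
  assumes "spans R M B" "B \<subseteq> {v}" "v \<in> carrier M" "x \<in> carrier M"
  shows "\<exists>r \<in> carrier R. x = r \<odot>\<^bsub>M\<^esub> v"
proof -
  have "is_lin_comb R M B x"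
    using assms(1,4) by (simp add: spans_def)
  then obtain F c where F: "F \<subseteq> B" "c \<in> F \<rightarrow> carrier R"
    and x: "x = finsum M (\<lambda>w. c w \<odot>\<^bsub>M\<^esub> w) F"
    unfolding is_lin_comb_def by blast
  consider "F = {}" | "F = {v}"
    using F(1) assms(2) by blast
  then show ?thesis
  proof cases
    case 1
    then have "x = \<zero> \<odot>\<^bsub>M\<^esub> v"
      using x assms(3) by simp
    then show ?thesis by blast
  next
    case 2
    then have "x = c v \<odot>\<^bsub>M\<^esub> v"
      using x F(2) assms(3) by simp
    then show ?thesis
      using F(2) 2 by blast
  qed
qed

lemma (in module) fin_genI_pair:
  assumes u: "u \<in> carrier M" and v: "v \<in> carrier M" and "u \<noteq> v"
    and generates: "\<And>x. x \<in> carrier M \<Longrightarrow>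
      \<exists>p \<in> carrier R. \<exists>q \<in> carrier R. x = p \<odot>\<^bsub>M\<^esub> u \<oplus>\<^bsub>M\<^esub> q \<odot>\<^bsub>M\<^esub> v"
  shows "fin_gen R M"
proof -
  have "is_lin_comb R M {u, v} x" if "x \<in> carrier M" for x
  proof -
    obtain p q where pq: "p \<in> carrier R" "q \<in> carrier R"
      and x: "x = p \<odot>\<^bsub>M\<^esub> u \<oplus>\<^bsub>M\<^esub> q \<odot>\<^bsub>M\<^esub> v"
      using generates \<open>x \<in> carrier M\<close> by blast
    let ?c = "\<lambda>w. if w = u then p else q"
    have "finsum M (\<lambda>w. ?c w \<odot>\<^bsub>M\<^esub> w) {u, v} = x"
      using u v \<open>u \<noteq> v\<close> pq x by (simp add: finsum_insert)
    then show ?thesis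
      unfolding is_lin_comb_def using pq
      by (intro exI[of _ "{u, v}"] exI[of _ ?c]) auto
  qed
  then show ?thesis
    using u v unfolding fin_gen_def spans_def by (intro exI[of _ "{u, v}"]) auto
qed

locale injective_functional = module R M for R (structure) and M +
  fixes \<iota>
  assumes functional: "\<iota> \<in> carrier (dual_module R M)"
    and injective: "inj_on \<iota> (carrier M)"
begin

lemma functional_closed: "x \<in> carrier M \<Longrightarrow> \<iota> x \<in> carrier R"
  and functional_add: "\<lbrakk>x \<in> carrier M; y \<in> carrier M\<rbrakk> \<Longrightarrow> \<iota> (x \<oplus>\<^bsub>M\<^esub> y) = \<iota> x \<oplus> \<iota> y"
  and functional_smult: "\<lbrakk>r \<in> carrier R; x \<in> carrier M\<rbrakk> \<Longrightarrow> \<iota> (r \<odot>\<^bsub>M\<^esub> x) = r \<otimes> \<iota> x"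
  using dual_module_memD[OF functional] by auto

lemma functional_zero: "\<iota> \<zero>\<^bsub>M\<^esub> = \<zero>"
  using functional_smult[of \<zero> "\<zero>\<^bsub>M\<^esub>"] functional_closed[of "\<zero>\<^bsub>M\<^esub>"] by simp

lemma functional_eqD: "\<lbrakk>x \<in> carrier M; y \<in> carrier M; \<iota> x = \<iota> y\<rbrakk> \<Longrightarrow> x = y"
  using injective by (rule inj_onD)

lemma torsionless: "torsionless R M"
  unfolding torsionless_def
proof (rule inj_onI)
  fix x y assume "x \<in> carrier M" "y \<in> carrier M" "double_dual_map R M x = double_dual_map R M y"
  then have "\<iota> x = \<iota> y"
    using functional by (simp add: double_dual_map_def fun_eq_iff) metis
  then show "x = y"
    using \<open>x \<in> carrier M\<close> \<open>y \<in> carrier M\<close> by (rule functional_eqD[rotated 2])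
qed

lemma lin_indep_subsingleton:
  assumes "\<one> \<noteq> \<zero>" "lin_indep R M B" "B \<subseteq> carrier M" "x \<in> B" "y \<in> B"
  shows "x = y"
proof (rule ccontr)
  assume "x \<noteq> y"
  have x: "x \<in> carrier M" and y: "y \<in> carrier M"
    using assms(3-5) by auto
  have indep: "c w = \<zero>" if "finite F" "F \<subseteq> B" "c \<in> F \<rightarrow> carrier R"
    "finsum M (\<lambda>v. c v \<odot>\<^bsub>M\<^esub> v) F = \<zero>\<^bsub>M\<^esub>" "w \<in> F" for F c w
    using assms(2) that unfolding lin_indep_def by blast
  let ?c = "\<lambda>w. if w = x then \<iota> y else \<ominus> \<iota> x"
  have "finsum M (\<lambda>w. ?c w \<odot>\<^bsub>M\<^esub> w) {x, y} = \<iota> y \<odot>\<^bsub>M\<^esub> x \<oplus>\<^bsub>M\<^esub> (\<ominus> \<iota> x) \<odot>\<^bsub>M\<^esub> y"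
    using x y \<open>x \<noteq> y\<close> functional_closed by (simp add: finsum_insert)
  also have "\<dots> = \<zero>\<^bsub>M\<^esub>"
  proof (rule functional_eqD)
    show "\<iota> (\<iota> y \<odot>\<^bsub>M\<^esub> x \<oplus>\<^bsub>M\<^esub> (\<ominus> \<iota> x) \<odot>\<^bsub>M\<^esub> y) = \<iota> \<zero>\<^bsub>M\<^esub>"
      using x y functional_closed[OF x] functional_closed[OF y]
      by (simp add: functional_add functional_smult functional_zero) algebra
  qed (use x y functional_closed in auto)
  finally have "\<iota> y = \<zero>"
    using indep[of "{x, y}" ?c x] assms(4,5) functional_closed x y by auto
  then have "y = \<zero>\<^bsub>M\<^esub>"
    using y functional_zero by (intro functional_eqD) auto
  then have "finsum M (\<lambda>w. \<one> \<odot>\<^bsub>M\<^esub> w) {y} = \<zero>\<^bsub>M\<^esub>"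
    by simp
  then show False
    using indep[of "{y}" "\<lambda>_. \<one>" y] assms(1,5) by auto
qed

lemma cyclic_if_free:
  assumes "free_module R M" "\<one> \<noteq> \<zero>"
  obtains v where "v \<in> carrier M" "\<And>x. x \<in> carrier M \<Longrightarrow> \<exists>r \<in> carrier R. x = r \<odot>\<^bsub>M\<^esub> v"
proof -
  obtain B where B: "B \<subseteq> carrier M" "spans R M B" "lin_indep R M B"
    using assms(1) unfolding free_module_def by blast
  obtain v where v: "v \<in> carrier M" "B \<subseteq> {v}"
  proof (cases "B = {}")
    case True
    then show thesis using that[of "\<zero>\<^bsub>M\<^esub>"] by simp
  next
    case False
    then obtain v where "v \<in> B" by blast
    then show thesis
      using that[of v] B lin_indep_subsingleton[OF assms(2) B(3,1)] by blast
  qed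
  then show thesis
    using that spans_subset_singletonD[OF B(2) v(2,1)] by blast
qed

lemma principal_image_if_free:
  assumes "free_module R M" "\<one> \<noteq> \<zero>"
  obtains d where "d \<in> carrier R" "\<iota> ` carrier M = PIdl d"
proof -
  obtain v where v: "v \<in> carrier M"
    and generates: "\<And>x. x \<in> carrier M \<Longrightarrow> \<exists>r \<in> carrier R. x = r \<odot>\<^bsub>M\<^esub> v"
    using cyclic_if_free[OF assms] by blast
  have "\<iota> ` carrier M = PIdl (\<iota> v)"
  proof
    show "\<iota> ` carrier M \<subseteq> PIdl (\<iota> v)"
    proof
      fix z assume "z \<in> \<iota> ` carrier M"
      then obtain x where x: "x \<in> carrier M" "z = \<iota> x" by blast
      then obtain r where "r \<in> carrier R" "x = r \<odot>\<^bsub>M\<^esub> v"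
        using generates by blast
      then show "z \<in> PIdl (\<iota> v)"
        using x v functional_smult unfolding cgenideal_def by blast
    qed
    show "PIdl (\<iota> v) \<subseteq> \<iota> ` carrier M"
    proof
      fix z assume "z \<in> PIdl (\<iota> v)"
      then obtain r where r: "r \<in> carrier R" "z = r \<otimes> \<iota> v"
        unfolding cgenideal_def by blast
      then have "z = \<iota> (r \<odot>\<^bsub>M\<^esub> v)"
        using v by (simp add: functional_smult)
      then show "z \<in> \<iota> ` carrier M"
        using r(1) v by blast
    qed
  qed
  then show thesis
    using that functional_closed[OF v] by blast
qed

end

lemma regular_seq_of_depth_ge:
  assumes "enat (Suc n) \<le> depth R m"
  obtains xs where "regular_seq R m xs" "Suc n \<le> length xs"
proof (rule ccontr)
  assume "\<not> thesis"
  then have "\<forall>xs. regular_seq R m xs \<longrightarrow> length xs \<le> n"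
    using that by force
  then have "depth R m \<le> enat n"
    unfolding depth_def by (auto intro!: Sup_least)
  with assms show False
    using order_trans by fastforce
qed

definition regular_pair :: "('a, 'c) ring_scheme \<Rightarrow> 'a \<Rightarrow> 'a \<Rightarrow> bool" where
  "regular_pair R a b \<longleftrightarrow> a \<in> carrier R \<and> b \<in> carrier R \<and>
     (\<forall>y \<in> carrier R. a \<otimes>\<^bsub>R\<^esub> y = \<zero>\<^bsub>R\<^esub> \<longrightarrow> y = \<zero>\<^bsub>R\<^esub>) \<and>
     (\<forall>y \<in> carrier R. b \<otimes>\<^bsub>R\<^esub> y \<in> PIdl\<^bsub>R\<^esub> a \<longrightarrow> y \<in> PIdl\<^bsub>R\<^esub> a) \<and>
     Idl\<^bsub>R\<^esub> {a, b} \<noteq> carrier R"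

context cring
begin

lemma genideal_pair_eq:
  assumes a: "a \<in> carrier R" and b: "b \<in> carrier R"
  shows "Idl {a, b} = {p \<otimes> a \<oplus> q \<otimes> b | p q. p \<in> carrier R \<and> q \<in> carrier R}"
    (is "_ = ?S")
proof
  have "?S = PIdl a <+>\<^bsub>R\<^esub> PIdl b"
    unfolding set_add_def' cgenideal_def by blast
  then have "ideal ?S R"
    using a b by (simp add: add_ideals cgenideal_ideal)
  moreover have "a \<in> ?S"
    using a b by (intro CollectI exI[of _ \<one>] exI[of _ \<zero>]) simp
  moreover have "b \<in> ?S"
    using a b by (intro CollectI exI[of _ \<zero>] exI[of _ \<one>]) simp
  ultimately show "Idl {a, b} \<subseteq> ?S"
    by (intro genideal_minimal) auto
next
  interpret I: ideal "Idl {a, b}" R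
    using a b by (intro genideal_ideal) simp
  have "a \<in> Idl {a, b}" "b \<in> Idl {a, b}"
    using a b genideal_self[of "{a, b}"] by auto
  then show "?S \<subseteq> Idl {a, b}"
    by (auto intro: I.a_closed I.I_l_closed)
qed

lemma regular_pair_cancel:
  assumes "regular_pair R a b" "x \<in> carrier R" "y \<in> carrier R" "a \<otimes> x = a \<otimes> y"
  shows "x = y"
proof -
  have a: "a \<in> carrier R" using assms(1) by (simp add: regular_pair_def)
  have "a \<otimes> (x \<ominus> y) = \<zero>" using assms(2-4) a by algebra
  then have "x \<ominus> y = \<zero>" using assms(1-3) by (simp add: regular_pair_def)
  then show ?thesis using assms(2,3) sum_zero_eq_neg[of x "\<ominus> y"] by (simp add: a_minus_def)
qed

lemma regular_pair_one_notin:
  assumes "regular_pair R a b"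
  shows "\<one> \<notin> Idl {a, b}"
proof
  assume "\<one> \<in> Idl {a, b}"
  then have "Idl {a, b} = carrier R"
    using assms by (intro ideal.one_imp_carrier genideal_ideal) (auto simp: regular_pair_def)
  then show False using assms by (simp add: regular_pair_def)
qed

lemma regular_pair_one_neq_zero:
  assumes "regular_pair R a b"
  shows "\<one> \<noteq> \<zero>"
proof
  assume "\<one> = \<zero>"
  have "\<zero> \<in> Idl {a, b}"
    using assms by (intro additive_subgroup.zero_closed ideal.axioms(1) genideal_ideal)
      (auto simp: regular_pair_def)
  with \<open>\<one> = \<zero>\<close> show False
    using regular_pair_one_notin[OF assms] by simp
qed

lemma regular_pair_neq:
  assumes ab: "regular_pair R a b"
  shows "a \<noteq> b"
proof
  assume "a = b"
  have a: "a \<in> carrier R" and b: "b \<in> carrier R"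
    using ab by (auto simp: regular_pair_def)
  have "b \<otimes> \<one> \<in> PIdl a"
    using \<open>a = b\<close> a by (simp add: cgenideal_self)
  then have "\<one> \<in> PIdl a"
    using ab one_closed unfolding regular_pair_def by blast
  then obtain r where r: "r \<in> carrier R" "\<one> = r \<otimes> a"
    unfolding cgenideal_def by blast
  then have "\<one> = r \<otimes> a \<oplus> \<zero> \<otimes> b"
    using a b by simp
  then have "\<one> \<in> Idl {a, b}"
    unfolding genideal_pair_eq[OF a b] using r(1) by blast
  then show False using regular_pair_one_notin[OF ab] by contradiction
qed

lemma regular_pair_not_principal:
  assumes ab: "regular_pair R a b" and d: "d \<in> carrier R"
  shows "Idl {a, b} \<noteq> PIdl d"
proof
  assume I_eq: "Idl {a, b} = PIdl d"
  have a: "a \<in> carrier R" and b: "b \<in> carrier R"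
    using ab by (auto simp: regular_pair_def)
  have "a \<in> PIdl d" "b \<in> PIdl d"
    using I_eq genideal_self[of "{a, b}"] a b by auto
  then obtain p q where p: "p \<in> carrier R" "a = p \<otimes> d" and q: "q \<in> carrier R" "b = q \<otimes> d"
    unfolding cgenideal_def by blast
  have "b \<otimes> p = q \<otimes> a" using p q d by (simp add: m_ac)
  then have "b \<otimes> p \<in> PIdl a"
    using q(1) unfolding cgenideal_def by blast
  then have "p \<in> PIdl a"
    using ab p(1) unfolding regular_pair_def by blast
  then obtain r where r: "r \<in> carrier R" "p = r \<otimes> a"
    unfolding cgenideal_def by blast
  have "a \<otimes> \<one> = p \<otimes> d"
    using a p(2) by simp
  also have "\<dots> = a \<otimes> (r \<otimes> d)"
    using a r d by (simp add: m_ac)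
  finally have "\<one> = r \<otimes> d"
    using regular_pair_cancel[OF ab] r d by simp
  moreover have "r \<otimes> d \<in> Idl {a, b}"
    unfolding I_eq cgenideal_def using r(1) by blast
  ultimately show False
    using regular_pair_one_notin[OF ab] by simp
qed

lemma genideal_empty: "Idl {} = {\<zero>}"
proof
  show "Idl {} \<subseteq> {\<zero>}"
    by (intro genideal_minimal zeroideal) simp
  show "{\<zero>} \<subseteq> Idl {}"
    using additive_subgroup.zero_closed[OF ideal.axioms(1)[OF genideal_ideal]] by simp
qed

lemma regular_pair_of_regular_seq:
  assumes m: "m \<subseteq> carrier R" and xs: "regular_seq R m (a # b # ys)"
  shows "regular_pair R a b"
proof -
  have carr: "set (a # b # ys) \<subseteq> carrier R"
    using xs m by (auto simp: regular_seq_def)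
  then have a: "a \<in> carrier R" and b: "b \<in> carrier R"
    by auto
  have "\<forall>y \<in> carrier R. a \<otimes> y \<in> Idl {} \<longrightarrow> y \<in> Idl {}"
    using xs unfolding regular_seq_def by (metis length_Cons nth_Cons_0 take_0 zero_less_Suc empty_set)
  then have nzd: "\<forall>y \<in> carrier R. a \<otimes> y = \<zero> \<longrightarrow> y = \<zero>"
    by (simp add: genideal_empty)
  have "\<forall>y \<in> carrier R. b \<otimes> y \<in> Idl {a} \<longrightarrow> y \<in> Idl {a}"
    using xs unfolding regular_seq_def
    by (metis One_nat_def length_Cons nth_Cons_Suc nth_Cons_0 take_Suc_Cons take_0 list.set
        Suc_less_eq zero_less_Suc)
  then have reg: "\<forall>y \<in> carrier R. b \<otimes> y \<in> PIdl a \<longrightarrow> y \<in> PIdl a"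
    by (simp add: cgenideal_eq_genideal[OF a])
  have "Idl {a, b} \<subseteq> Idl (set (a # b # ys))"
    using carr genideal_self[OF carr] by (intro genideal_minimal genideal_ideal) auto
  then have "Idl {a, b} \<noteq> carrier R"
    using xs genideal_ideal[OF carr] by (auto simp: regular_seq_def dest: ideal.Icarr)
  with a b nzd reg show ?thesis
    by (simp add: regular_pair_def)
qed

lemma regular_pair_if_depth_ge_2:
  assumes "m \<subseteq> carrier R" "2 \<le> depth R m"
  obtains a b where "regular_pair R a b"
proof -
  have "enat (Suc 1) \<le> depth R m"
    using assms(2) by (simp add: numeral_eq_enat numeral_2_eq_2)
  then obtain xs where xs: "regular_seq R m xs" "Suc 1 \<le> length xs"
    by (rule regular_seq_of_depth_ge)
  then obtain a b ys where "xs = a # b # ys"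
    by (cases xs; cases "tl xs") auto
  then show thesis
    using that regular_pair_of_regular_seq[OF assms(1)] xs(1) by blast
qed

end

locale regular_pair_ideal_module = injective_functional +
  fixes a b
  assumes regular_pair: "regular_pair R a b"
    and image: "\<iota> ` carrier M = Idl {a, b}"
begin

lemma generators_closed: "a \<in> carrier R" "b \<in> carrier R"
  using regular_pair by (auto simp: regular_pair_def)

lemma generator_preimages:
  obtains xa xb where "xa \<in> carrier M" "xb \<in> carrier M" "\<iota> xa = a" "\<iota> xb = b"
proof -
  have "a \<in> \<iota> ` carrier M" "b \<in> \<iota> ` carrier M"
    using image genideal_self[of "{a, b}"] generators_closed by auto
  then show thesis
    using that by blast
qed

lemma generated_by_preimages:
  assumes xa: "xa \<in> carrier M" "\<iota> xa = a" and xb: "xb \<in> carrier M" "\<iota> xb = b"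
    and x: "x \<in> carrier M"
  shows "\<exists>p \<in> carrier R. \<exists>q \<in> carrier R. x = p \<odot>\<^bsub>M\<^esub> xa \<oplus>\<^bsub>M\<^esub> q \<odot>\<^bsub>M\<^esub> xb"
proof -
  have "\<iota> x \<in> Idl {a, b}"
    using image x by blast
  then obtain p q where pq: "p \<in> carrier R" "q \<in> carrier R" "\<iota> x = p \<otimes> a \<oplus> q \<otimes> b"
    using genideal_pair_eq[OF generators_closed] by auto
  have "x = p \<odot>\<^bsub>M\<^esub> xa \<oplus>\<^bsub>M\<^esub> q \<odot>\<^bsub>M\<^esub> xb"
    using x xa xb pq by (intro functional_eqD) (auto simp: functional_add functional_smult)
  then show ?thesis
    using pq by blast
qed

lemma fin_gen: "fin_gen R M"
proof -
  obtain xa xb where xa: "xa \<in> carrier M" "\<iota> xa = a" and xb: "xb \<in> carrier M" "\<iota> xb = b"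
    by (rule generator_preimages)
  moreover have "xa \<noteq> xb"
    using xa xb regular_pair_neq[OF regular_pair] by auto
  ultimately show ?thesis
    by (intro fin_genI_pair generated_by_preimages)
qed

lemma functional_on_preimages:
  assumes f: "f \<in> carrier (dual_module R M)"
    and xa: "xa \<in> carrier M" "\<iota> xa = a" and xb: "xb \<in> carrier M" "\<iota> xb = b"
  shows "\<exists>r \<in> carrier R. f xa = r \<otimes> a \<and> f xb = r \<otimes> b"
proof -
  note a = generators_closed(1) and b = generators_closed(2)
  have u: "f xa \<in> carrier R" and v: "f xb \<in> carrier R"
    using dual_module_closed[OF f] xa xb by auto
  have "b \<otimes> f xa = f (b \<odot>\<^bsub>M\<^esub> xa)"
    using xa b by (simp add: dual_module_smult[OF f])
  also have "b \<odot>\<^bsub>M\<^esub> xa = a \<odot>\<^bsub>M\<^esub> xb"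
    using xa xb a b by (intro functional_eqD) (auto simp: functional_smult m_comm)
  also have "f (a \<odot>\<^bsub>M\<^esub> xb) = a \<otimes> f xb"
    using xb a by (simp add: dual_module_smult[OF f])
  finally have bu_av: "b \<otimes> f xa = a \<otimes> f xb" .
  then have "b \<otimes> f xa = f xb \<otimes> a"
    using v a by (simp add: m_comm)
  then have "b \<otimes> f xa \<in> PIdl a"
    using v unfolding cgenideal_def by blast
  then have "f xa \<in> PIdl a"
    using regular_pair u unfolding regular_pair_def by blast
  then obtain r where r: "r \<in> carrier R" "f xa = r \<otimes> a"
    unfolding cgenideal_def by blast
  have "a \<otimes> f xb = a \<otimes> (r \<otimes> b)"
    using bu_av r a b by (simp add: m_ac)
  then have "f xb = r \<otimes> b"
    using regular_pair_cancel[OF regular_pair] v r b by simp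
  with r show ?thesis
    by blast
qed

lemma dual_eq_smult_functional:
  assumes f: "f \<in> carrier (dual_module R M)"
  shows "\<exists>r \<in> carrier R. f = r \<odot>\<^bsub>dual_module R M\<^esub> \<iota>"
proof -
  interpret D: module R "dual_module R M"
    by (rule module_dual_module)
  obtain xa xb where xa: "xa \<in> carrier M" "\<iota> xa = a" and xb: "xb \<in> carrier M" "\<iota> xb = b"
    by (rule generator_preimages)
  then obtain r where r: "r \<in> carrier R" "f xa = r \<otimes> a" "f xb = r \<otimes> b"
    using functional_on_preimages[OF f] by blast
  have "f = r \<odot>\<^bsub>dual_module R M\<^esub> \<iota>"
  proof (rule dual_module_eqI[OF f])
    show "r \<odot>\<^bsub>dual_module R M\<^esub> \<iota> \<in> carrier (dual_module R M)"
      using r(1) functional by (rule D.smult_closed)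
  next
    fix x assume x: "x \<in> carrier M"
    then obtain p q where pq: "p \<in> carrier R" "q \<in> carrier R"
      and x_eq: "x = p \<odot>\<^bsub>M\<^esub> xa \<oplus>\<^bsub>M\<^esub> q \<odot>\<^bsub>M\<^esub> xb"
      using generated_by_preimages[OF xa xb] by blast
    have "f x = p \<otimes> (r \<otimes> a) \<oplus> q \<otimes> (r \<otimes> b)"
      using pq xa xb r by (simp add: x_eq dual_module_add[OF f] dual_module_smult[OF f])
    also have "\<dots> = r \<otimes> \<iota> x"
      using pq xa xb r generators_closed
      by (simp add: x_eq functional_add functional_smult r_distr m_lcomm)
    finally show "f x = (r \<odot>\<^bsub>dual_module R M\<^esub> \<iota>) x"
      using x by simp
  qed
  then show ?thesis
    using r(1) by blast
qed

lemma free_dual: "free_module R (dual_module R M)"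
proof (rule module.free_module_singletonI[OF module_dual_module functional])
  show "\<exists>r \<in> carrier R. f = r \<odot>\<^bsub>dual_module R M\<^esub> \<iota>" if "f \<in> carrier (dual_module R M)" for f
    using that by (rule dual_eq_smult_functional)
next
  fix r assume r: "r \<in> carrier R" "r \<odot>\<^bsub>dual_module R M\<^esub> \<iota> = \<zero>\<^bsub>dual_module R M\<^esub>"
  obtain xa where xa: "xa \<in> carrier M" "\<iota> xa = a"
    by (rule generator_preimages)
  have "r \<otimes> a = \<zero>"
    using fun_cong[OF r(2), of xa] xa by simp
  then show "r = \<zero>"
    using regular_pair r(1) generators_closed(1) by (auto simp: regular_pair_def m_comm)
qed

lemma not_free: "\<not> free_module R M"
proof
  assume "free_module R M"
  then obtain d where "d \<in> carrier R" "\<iota> ` carrier M = PIdl d"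
    using regular_pair_one_neq_zero[OF regular_pair] by (rule principal_image_if_free)
  then show False
    using image regular_pair_not_principal[OF regular_pair] by auto
qed

end

definition ideal_module :: "('a \<Rightarrow> 'b) \<Rightarrow> ('a, 'c) ring_scheme \<Rightarrow> 'a set \<Rightarrow> ('a, 'b) module" where
  "ideal_module e R I = \<lparr>carrier = e ` I, monoid.mult = undefined, one = undefined,
     ring.zero = e \<zero>\<^bsub>R\<^esub>, ring.add = (\<lambda>U V. e (the_inv e U \<oplus>\<^bsub>R\<^esub> the_inv e V)),
     module.smult = (\<lambda>r U. e (r \<otimes>\<^bsub>R\<^esub> the_inv e U))\<rparr>"

lemma (in cring) ideal_module_simps:
  assumes "inj e"
  shows "carrier (ideal_module e R I) = e ` I"
    and "\<zero>\<^bsub>ideal_module e R I\<^esub> = e \<zero>"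
    and "e x \<oplus>\<^bsub>ideal_module e R I\<^esub> e y = e (x \<oplus> y)"
    and "r \<odot>\<^bsub>ideal_module e R I\<^esub> e x = e (r \<otimes> x)"
  using assms by (simp_all add: ideal_module_def the_inv_f_f)

lemma (in cring) module_ideal_module:
  assumes e: "inj e" and I: "ideal I R"
  shows "module R (ideal_module e R I)"
proof -
  interpret I: ideal I R by (rule I)
  note simps = ideal_module_simps[OF e]
  show ?thesis
  proof (rule moduleI)
    show "abelian_group (ideal_module e R I)"
    proof (rule abelian_groupI)
      fix U assume "U \<in> carrier (ideal_module e R I)"
      then obtain x where x: "x \<in> I" "U = e x"
        by (auto simp: simps)
      then have "e (\<ominus> x) \<in> carrier (ideal_module e R I)"
        by (simp add: simps I.a_inv_closed)
      moreover have "e (\<ominus> x) \<oplus>\<^bsub>ideal_module e R I\<^esub> U = \<zero>\<^bsub>ideal_module e R I\<^esub>"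
        using x by (simp add: simps I.Icarr l_neg)
      ultimately show "\<exists>V \<in> carrier (ideal_module e R I).
          V \<oplus>\<^bsub>ideal_module e R I\<^esub> U = \<zero>\<^bsub>ideal_module e R I\<^esub>"
        by blast
    qed (auto simp: simps I.a_closed I.Icarr a_ac)
  qed (auto simp: simps I.I_l_closed I.Icarr l_distr r_distr m_assoc is_cring)
qed

lemma (in cring) ideal_module_injective_functional:
  assumes e: "inj e" and I: "ideal I R"
  shows "injective_functional R (ideal_module e R I) (\<lambda>U \<in> e ` I. the_inv e U)"
proof -
  interpret M: module R "ideal_module e R I"
    by (rule module_ideal_module[OF e I])
  note simps = ideal_module_simps[OF e]
  show ?thesis
  proof
    show "(\<lambda>U \<in> e ` I. the_inv e U) \<in> carrier (dual_module R (ideal_module e R I))"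
      unfolding simps(1)[symmetric]
      by (rule M.dual_module_memI) (auto simp: simps e the_inv_f_f ideal.Icarr[OF I])
    show "inj_on (\<lambda>U \<in> e ` I. the_inv e U) (carrier (ideal_module e R I))"
      by (auto simp: simps e the_inv_f_f intro: inj_onI)
  qed
qed

lemma (in cring) regular_pair_ideal_module_ideal_module:
  assumes ab: "regular_pair R a b" and e: "inj e"
  shows "regular_pair_ideal_module R (ideal_module e R (Idl {a, b}))
    (\<lambda>U \<in> e ` (Idl {a, b}). the_inv e U) a b"
proof -
  have I: "ideal (Idl {a, b}) R"
    using ab by (intro genideal_ideal) (auto simp: regular_pair_def)
  have "(\<lambda>U \<in> e ` (Idl {a, b}). the_inv e U) ` carrier (ideal_module e R (Idl {a, b})) = Idl {a, b}"
    using e by (force simp: ideal_module_simps the_inv_f_f)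
  then show ?thesis
    using ideal_module_injective_functional[OF e I] ab
    by (intro regular_pair_ideal_module.intro regular_pair_ideal_module_axioms.intro) auto
qed

theorem proposition4p20:
  fixes R :: "'a ring" and m :: "'a set"
  assumes "cring R" and "noetherian_ring R"
    and "maximalideal m R" and "\<forall>J. maximalideal J R \<longrightarrow> J = m"
    and "\<forall>M :: ('a, (nat \<Rightarrow> 'a) set) module.
           module R M \<and> fin_gen R M \<and> torsionless R M \<and> free_module R (dual_module R M)
           \<longrightarrow> free_module R M"
  shows "depth R m < 2"
proof (rule ccontr)
  interpret cring R by fact
  have "m \<subseteq> carrier R"
    using assms(3) by (auto dest: maximalideal.axioms(1) ideal.Icarr)
  moreover assume "\<not> depth R m < 2"
  ultimately obtain a b where ab: "regular_pair R a b"
    by (auto simp: not_less elim: regular_pair_if_depth_ge_2)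
  \<comment> \<open>The hypothesis only speaks of modules whose elements are sets of functions
    from nat to the ring, so the ideal is copied into that type along the injection e.\<close>
  define e :: "'a \<Rightarrow> (nat \<Rightarrow> 'a) set" where "e x = {\<lambda>_. x}" for x
  have "inj e"
    by (auto simp: e_def fun_eq_iff intro: injI)
  define I where "I = Idl\<^bsub>R\<^esub> {a, b}"
  define M where "M = ideal_module e R I"
  interpret regular_pair_ideal_module R M "\<lambda>U \<in> e ` I. the_inv e U" a b
    unfolding M_def I_def by (rule regular_pair_ideal_module_ideal_module[OF ab \<open>inj e\<close>])
  show False
    using assms(5) module_axioms fin_gen torsionless free_dual not_free by blast
qed

end
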